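(* Let $\Gamma\subseteq A$ be $\Bbbk$-algebras, $\sim$ an equivalence relation on $\mathrm{cfs}(\Gamma)$, with $\Gamma$ a Harish-Chandra block subalgebra of $A$, and let $V$ be a Harish-Chandra block module. Then: (i) if $\mathcal D\subseteq\mathrm{cfs}(\Gamma)/{\sim}$ is $\prec$-closed (i.e. $B\in\mathcal D$ and $B\prec C$ imply $C\in\mathcal D$), then $V(\mathcal D):=\bigoplus_{B\in\mathcal D}V(B)$ is an $A$-submodule of $V$; (ii) $V=\bigoplus_{\mathcal D\in(\mathrm{cfs}(\Gamma)/{\sim})/\Delta}V(\mathcal D)$ as $A$-modules; (iii) if $V$ is indecomposable and $B\in\mathrm{Supp}(V)$, then $\mathrm{Supp}(V)$ is contained in the $\Delta$-class of $B$; (iv) if $V$ is irreducible and $B\in\mathrm{Supp}(V)$, then $\mathrm{Supp}(V)$ is contained in the $\nabla$-class of $B$.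
   Context: $\mathrm{cfs}(\Gamma)$: maximal two-sided ideals $\mathfrak m$ with $\dim\Gamma/\mathfrak m<\infty$. For a class $B$, $\mathcal W(B)=\{\mathfrak m_1\cdots\mathfrak m_k:k\ge0,\mathfrak m_i\in B\}$; for a $\Gamma$-module $V$, $V(B)=\{v:\mathfrak mv=0$ for some $\mathfrak m\in\mathcal W(B)\}$; $V$ is a block module if $V=\bigoplus_BV(B)$; $\mathrm{Supp}(V)=\{B:V(B)\ne0\}$. A Harish-Chandra block module is an $A$-module that is a block module over $\Gamma$. $\Gamma$ is a Harish-Chandra block subalgebra of $A$ if $A/A\mathfrak m$ is a block module for every $B$ and $\mathfrak m\in\mathcal W(B)$. $\prec$ is the preorder on $\mathrm{cfs}(\Gamma)/{\sim}$ generated by $B\prec C$ whenever $C\in\mathrm{Supp}(A/A\mathfrak m)$ for some $\mathfrak m\in B$; $\Delta$ is the equivalence relation generated by $\prec$ and $\nabla$ the equivalence relation induced by $\prec$ ($B\nabla C$ iff $B\prec C$ and $C\prec B$). *)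

theory Defs
  imports Main
begin

text \<open>Setting: \<open>A\<close> is a ring (type \<open>'a\<close>), made into a \<open>k\<close>-algebra by a unital ring
  homomorphism \<open>sc :: 'k \<Rightarrow> 'a\<close> with central image (scalar multiplication \<open>c \<cdot> a = sc c * a\<close>).
  \<open>\<Gamma>\<close> is a subset \<open>G\<close> of \<open>A\<close> that is a (unital) \<open>k\<close>-subalgebra.\<close>

definition is_kalg_hom :: "('k::field \<Rightarrow> 'a::ring_1) \<Rightarrow> bool" where
  "is_kalg_hom sc \<longleftrightarrow> (\<forall>c d. sc (c + d) = sc c + sc d) \<and> (\<forall>c d. sc (c * d) = sc c * sc d)
     \<and> sc 1 = 1 \<and> (\<forall>c x. sc c * x = x * sc c)"

definition subalg :: "('k::field \<Rightarrow> 'a::ring_1) \<Rightarrow> 'a set \<Rightarrow> bool" where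
  "subalg sc G \<longleftrightarrow> range sc \<subseteq> G \<and> (\<forall>x\<in>G. \<forall>y\<in>G. x + y \<in> G \<and> x * y \<in> G) \<and> (\<forall>x\<in>G. - x \<in> G)"

definition is_module :: "('a::ring_1 \<Rightarrow> 'v::ab_group_add \<Rightarrow> 'v) \<Rightarrow> bool" where
  "is_module act \<longleftrightarrow> (\<forall>a b v. act (a + b) v = act a v + act b v) \<and> (\<forall>a v w. act a (v + w) = act a v + act a w)
     \<and> (\<forall>a b v. act (a * b) v = act a (act b v)) \<and> (\<forall>v. act 1 v = v)"

definition is_submod :: "('a::ring_1 \<Rightarrow> 'v::ab_group_add \<Rightarrow> 'v) \<Rightarrow> 'v set \<Rightarrow> bool" where
  "is_submod act S \<longleftrightarrow> 0 \<in> S \<and> (\<forall>x\<in>S. \<forall>y\<in>S. x + y \<in> S) \<and> (\<forall>a. \<forall>x\<in>S. act a x \<in> S)"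

definition two_sided_ideal :: "'a::ring_1 set \<Rightarrow> 'a set \<Rightarrow> bool" where
  "two_sided_ideal G m \<longleftrightarrow> m \<subseteq> G \<and> 0 \<in> m \<and> (\<forall>x\<in>m. \<forall>y\<in>m. x + y \<in> m) \<and> (\<forall>x\<in>m. - x \<in> m)
     \<and> (\<forall>g\<in>G. \<forall>x\<in>m. g * x \<in> m \<and> x * g \<in> m)"

definition maximal_ideal :: "'a::ring_1 set \<Rightarrow> 'a set \<Rightarrow> bool" where
  "maximal_ideal G m \<longleftrightarrow> two_sided_ideal G m \<and> m \<noteq> G
     \<and> (\<forall>J. two_sided_ideal G J \<and> m \<subseteq> J \<longrightarrow> J = m \<or> J = G)"

text \<open>\<open>dim\<^sub>k (\<Gamma>/m) < \<infinity>\<close>: \<open>\<Gamma>\<close> is spanned modulo \<open>m\<close> by finitely many elements.\<close>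
definition fin_codim :: "('k::field \<Rightarrow> 'a::ring_1) \<Rightarrow> 'a set \<Rightarrow> 'a set \<Rightarrow> bool" where
  "fin_codim sc G m \<longleftrightarrow> (\<exists>S. finite S \<and> S \<subseteq> G \<and> (\<forall>g\<in>G. \<exists>c. g - (\<Sum>s\<in>S. sc (c s) * s) \<in> m))"

definition cfs :: "('k::field \<Rightarrow> 'a::ring_1) \<Rightarrow> 'a set \<Rightarrow> 'a set set" where
  "cfs sc G = {m. maximal_ideal G m \<and> fin_codim sc G m}"

definition blocks :: "('k::field \<Rightarrow> 'a::ring_1) \<Rightarrow> 'a set \<Rightarrow> ('a set \<times> 'a set) set \<Rightarrow> 'a set set set" where
  "blocks sc G R = cfs sc G // R"

definition ideal_prod :: "'a::ring_1 set \<Rightarrow> 'a set \<Rightarrow> 'a set" where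
  "ideal_prod I J = {\<Sum>i<n. x i * y i | (n::nat) x y. \<forall>i<n. x i \<in> I \<and> y i \<in> J}"

text \<open>\<open>\<W>(B)\<close>: products \<open>m\<^sub>1\<cdots>m\<^sub>k\<close>, \<open>k \<ge> 0\<close>, \<open>m\<^sub>i \<in> B\<close> (empty product = \<open>\<Gamma>\<close>).\<close>
inductive_set Wset :: "'a::ring_1 set \<Rightarrow> 'a set set \<Rightarrow> 'a set set" for G B where
  W_unit: "G \<in> Wset G B"
| W_mult: "m \<in> Wset G B \<Longrightarrow> n \<in> B \<Longrightarrow> ideal_prod m n \<in> Wset G B"

definition left_ideal_gen :: "'a::ring_1 set \<Rightarrow> 'a set" where
  "left_ideal_gen m = {\<Sum>i<n. a i * x i | (n::nat) a x. \<forall>i<n. x i \<in> m}"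

text \<open>Block component of a quotient module \<open>M/N\<close> (\<open>M\<close> = the whole type), given as the preimage
  in \<open>M\<close>: \<open>(M/N)(B) = comp act N G B / N\<close>.\<close>
definition comp :: "('a::ring_1 \<Rightarrow> 'v::ab_group_add \<Rightarrow> 'v) \<Rightarrow> 'v set \<Rightarrow> 'a set \<Rightarrow> 'a set set \<Rightarrow> 'v set" where
  "comp act N G B = {v. \<exists>m\<in>Wset G B. \<forall>x\<in>m. act x v \<in> N}"

definition is_block_mod :: "('k::field \<Rightarrow> 'a::ring_1) \<Rightarrow> 'a set \<Rightarrow> ('a set \<times> 'a set) set
    \<Rightarrow> ('a \<Rightarrow> 'v::ab_group_add \<Rightarrow> 'v) \<Rightarrow> 'v set \<Rightarrow> bool" where
  "is_block_mod sc G R act N \<longleftrightarrow>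
     (\<forall>v. \<exists>F f. finite F \<and> F \<subseteq> blocks sc G R \<and> (\<forall>B\<in>F. f B \<in> comp act N G B) \<and> v - sum f F \<in> N)
   \<and> (\<forall>F f. finite F \<and> F \<subseteq> blocks sc G R \<and> (\<forall>B\<in>F. f B \<in> comp act N G B) \<and> sum f F \<in> N
        \<longrightarrow> (\<forall>B\<in>F. f B \<in> N))"

definition supp :: "('k::field \<Rightarrow> 'a::ring_1) \<Rightarrow> 'a set \<Rightarrow> ('a set \<times> 'a set) set
    \<Rightarrow> ('a \<Rightarrow> 'v::ab_group_add \<Rightarrow> 'v) \<Rightarrow> 'v set \<Rightarrow> 'a set set set" where
  "supp sc G R act N = {B \<in> blocks sc G R. \<exists>v\<in>comp act N G B. v \<notin> N}"

definition HC_block_subalg :: "('k::field \<Rightarrow> 'a::ring_1) \<Rightarrow> 'a set \<Rightarrow> ('a set \<times> 'a set) set \<Rightarrow> bool" where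
  "HC_block_subalg sc G R \<longleftrightarrow>
     (\<forall>B\<in>blocks sc G R. \<forall>m\<in>Wset G B. is_block_mod sc G R (*) (left_ideal_gen m))"

definition HC_block_module :: "('k::field \<Rightarrow> 'a::ring_1) \<Rightarrow> 'a set \<Rightarrow> ('a set \<times> 'a set) set
    \<Rightarrow> ('a \<Rightarrow> 'v::ab_group_add \<Rightarrow> 'v) \<Rightarrow> bool" where
  "HC_block_module sc G R act \<longleftrightarrow> is_module act \<and> is_block_mod sc G R act {0}"

definition prec_base :: "('k::field \<Rightarrow> 'a::ring_1) \<Rightarrow> 'a set \<Rightarrow> ('a set \<times> 'a set) set
    \<Rightarrow> ('a set set \<times> 'a set set) set" where
  "prec_base sc G R = {(B, C). B \<in> blocks sc G R \<and> C \<in> blocks sc G R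
      \<and> (\<exists>m\<in>B. C \<in> supp sc G R (*) (left_ideal_gen m))}"

definition prec :: "('k::field \<Rightarrow> 'a::ring_1) \<Rightarrow> 'a set \<Rightarrow> ('a set \<times> 'a set) set
    \<Rightarrow> ('a set set \<times> 'a set set) set" where
  "prec sc G R = Id_on (blocks sc G R) \<union> (prec_base sc G R)\<^sup>+"

definition Delta :: "('k::field \<Rightarrow> 'a::ring_1) \<Rightarrow> 'a set \<Rightarrow> ('a set \<times> 'a set) set
    \<Rightarrow> ('a set set \<times> 'a set set) set" where
  "Delta sc G R = Id_on (blocks sc G R) \<union> (prec_base sc G R \<union> (prec_base sc G R)\<inverse>)\<^sup>+"

definition Nabla :: "('k::field \<Rightarrow> 'a::ring_1) \<Rightarrow> 'a set \<Rightarrow> ('a set \<times> 'a set) set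
    \<Rightarrow> ('a set set \<times> 'a set set) set" where
  "Nabla sc G R = prec sc G R \<inter> (prec sc G R)\<inverse>"

definition VD :: "('a::ring_1 \<Rightarrow> 'v::ab_group_add \<Rightarrow> 'v) \<Rightarrow> 'a set \<Rightarrow> 'a set set set \<Rightarrow> 'v set" where
  "VD act G D = {sum f F | F f. finite F \<and> F \<subseteq> D \<and> (\<forall>B\<in>F. f B \<in> comp act {0} G B)}"

definition is_dsum :: "'i set \<Rightarrow> ('i \<Rightarrow> 'v::ab_group_add set) \<Rightarrow> bool" where
  "is_dsum I X \<longleftrightarrow>
     (\<forall>v. \<exists>F f. finite F \<and> F \<subseteq> I \<and> (\<forall>i\<in>F. f i \<in> X i) \<and> v = sum f F)
   \<and> (\<forall>F f. finite F \<and> F \<subseteq> I \<and> (\<forall>i\<in>F. f i \<in> X i) \<and> sum f F = 0 \<longrightarrow> (\<forall>i\<in>F. f i = 0))"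

definition indecomposable :: "('a::ring_1 \<Rightarrow> 'v::ab_group_add \<Rightarrow> 'v) \<Rightarrow> bool" where
  "indecomposable act \<longleftrightarrow> (\<exists>v::'v. v \<noteq> 0) \<and>
     \<not> (\<exists>S T. is_submod act S \<and> is_submod act T \<and> S \<noteq> {0} \<and> T \<noteq> {0} \<and> S \<inter> T = {0}
            \<and> (\<forall>v. \<exists>s\<in>S. \<exists>t\<in>T. v = s + t))"

definition irreducible_mod :: "('a::ring_1 \<Rightarrow> 'v::ab_group_add \<Rightarrow> 'v) \<Rightarrow> bool" where
  "irreducible_mod act \<longleftrightarrow> (\<exists>v::'v. v \<noteq> 0) \<and> (\<forall>S. is_submod act S \<longrightarrow> S = {0} \<or> S = UNIV)"

end

theory Submission
  imports Defs
begin

text \<open>Everything rests on one fact: if some \<open>m \<in> \<W>(B)\<close> annihilates \<open>v\<close>, then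
  \<open>A v \<subseteq> V(\<D>)\<close> for the upper set \<open>\<D> = {C. B \<prec> C}\<close>. This is proved by induction on
  \<open>m = m' n\<close> with \<open>n \<in> B\<close>. Since \<open>m'\<close> annihilates \<open>n v\<close>, induction gives \<open>(A n) v \<subseteq> V(\<D>)\<close>.
  Decomposing \<open>a \<in> A\<close> modulo \<open>A n\<close> into block components \<open>a\<^sub>C \<in> (A/A n)(C)\<close>, a component
  not in \<open>A n\<close> witnesses \<open>B \<prec> C\<close>, and some \<open>m'' \<in> \<W>(C)\<close> maps \<open>a\<^sub>C v\<close> into \<open>V(\<D>)\<close>.
  As \<open>V = V(\<D>) \<oplus> V(\<D>\<^sup>c)\<close> with both summands \<open>\<Gamma>\<close>-stable, the \<open>V(\<D>\<^sup>c)\<close>-part of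
  \<open>a\<^sub>C v\<close> is annihilated by \<open>m''\<close>, so it lies in \<open>V(C) \<subseteq> V(\<D>)\<close> and vanishes.
  This gives (i); (ii)--(iv) follow because \<open>\<Delta>\<close>-classes, their complements and
  \<open>\<prec>\<close>-upper sets are \<open>\<prec>\<close>-closed.\<close>

lemma sum_lessThan_add:
  fixes f :: "nat \<Rightarrow> 'b::comm_monoid_add"
  shows "(\<Sum>i<n + k. f i) = (\<Sum>i<n. f i) + (\<Sum>i<k. f (n + i))"
  by (induction k) (simp_all add: add.assoc)

lemma two_sided_ideal_sum:
  fixes k :: nat
  assumes "two_sided_ideal G I" "\<forall>i<k. h i \<in> I"
  shows "(\<Sum>i<k. h i) \<in> I"
  using assms(2) by (induction k) (use assms(1) in \<open>simp_all add: two_sided_ideal_def\<close>)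

lemma ideal_prod_memI:
  "u = (\<Sum>i<(n::nat). x i * y i) \<Longrightarrow> \<forall>i<n. x i \<in> I \<and> y i \<in> J \<Longrightarrow> u \<in> ideal_prod I J"
  unfolding ideal_prod_def by blast

lemma ideal_prod_memE:
  assumes "u \<in> ideal_prod I J"
  obtains n :: nat and x y where "u = (\<Sum>i<n. x i * y i)" "\<forall>i<n. x i \<in> I \<and> y i \<in> J"
  using assms unfolding ideal_prod_def by force

lemma mult_mem_ideal_prod: "x \<in> I \<Longrightarrow> y \<in> J \<Longrightarrow> x * y \<in> ideal_prod I J"
  by (rule ideal_prod_memI[where n = 1 and x = "\<lambda>_. x" and y = "\<lambda>_. y"]) simp_all

lemma ideal_prod_add:
  assumes "u \<in> ideal_prod I J" "w \<in> ideal_prod I J"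
  shows "u + w \<in> ideal_prod I J"
proof -
  obtain x y and n :: nat where u: "u = (\<Sum>i<n. x i * y i)" "\<forall>i<n. x i \<in> I \<and> y i \<in> J"
    using assms(1) by (rule ideal_prod_memE)
  obtain x' y' and k :: nat where w: "w = (\<Sum>i<k. x' i * y' i)" "\<forall>i<k. x' i \<in> I \<and> y' i \<in> J"
    using assms(2) by (rule ideal_prod_memE)
  define X where "X i = (if i < n then x i else x' (i - n))" for i
  define Y where "Y i = (if i < n then y i else y' (i - n))" for i
  have "u + w = (\<Sum>i<n + k. X i * Y i)"
    unfolding sum_lessThan_add u w X_def Y_def by simp
  moreover have "\<forall>i<n + k. X i \<in> I \<and> Y i \<in> J"
    using u w unfolding X_def Y_def by auto
  ultimately show ?thesis by (rule ideal_prod_memI)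
qed

lemma ideal_prod_subset_left:
  assumes "two_sided_ideal G I" "J \<subseteq> G"
  shows "ideal_prod I J \<subseteq> I"
proof
  fix u assume "u \<in> ideal_prod I J"
  then obtain x y and n :: nat where u: "u = (\<Sum>i<n. x i * y i)" "\<forall>i<n. x i \<in> I \<and> y i \<in> J"
    by (rule ideal_prod_memE)
  then have "\<forall>i<n. x i * y i \<in> I" using assms unfolding two_sided_ideal_def by blast
  then show "u \<in> I" unfolding u(1) by (rule two_sided_ideal_sum[OF assms(1)])
qed

lemma ideal_prod_subset_right:
  assumes "I \<subseteq> G" "two_sided_ideal G J"
  shows "ideal_prod I J \<subseteq> J"
proof
  fix u assume "u \<in> ideal_prod I J"
  then obtain x y and n :: nat where u: "u = (\<Sum>i<n. x i * y i)" "\<forall>i<n. x i \<in> I \<and> y i \<in> J"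
    by (rule ideal_prod_memE)
  then have "\<forall>i<n. x i * y i \<in> J" using assms unfolding two_sided_ideal_def by blast
  then show "u \<in> J" unfolding u(1) by (rule two_sided_ideal_sum[OF assms(2)])
qed

lemma ideal_prod_mono_left: "I \<subseteq> I' \<Longrightarrow> ideal_prod I J \<subseteq> ideal_prod I' J"
  unfolding ideal_prod_def by blast

lemma ideal_prod_carrier_left:
  assumes "1 \<in> G" "two_sided_ideal G J"
  shows "ideal_prod G J = J"
proof
  show "ideal_prod G J \<subseteq> J"
    using assms(2) by (intro ideal_prod_subset_right) (auto simp: two_sided_ideal_def)
  show "J \<subseteq> ideal_prod G J"
    using mult_mem_ideal_prod[OF assms(1), of _ J] by auto
qed

lemma two_sided_ideal_ideal_prod:
  assumes I: "two_sided_ideal G I" and J: "two_sided_ideal G J"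
  shows "two_sided_ideal G (ideal_prod I J)"
proof -
  have closed: "- u \<in> ideal_prod I J \<and> g * u \<in> ideal_prod I J \<and> u * g \<in> ideal_prod I J"
    if u_mem: "u \<in> ideal_prod I J" and g: "g \<in> G" for u g
  proof -
    obtain x y and n :: nat where u: "u = (\<Sum>i<n. x i * y i)" "\<forall>i<n. x i \<in> I \<and> y i \<in> J"
      using u_mem by (rule ideal_prod_memE)
    have "\<forall>i<n. - x i \<in> I \<and> g * x i \<in> I \<and> y i * g \<in> J"
      using u(2) I J g by (simp add: two_sided_ideal_def)
    then have "- u \<in> ideal_prod I J" "g * u \<in> ideal_prod I J" "u * g \<in> ideal_prod I J"
      using u(2)
      by (auto simp: u(1) sum_negf sum_distrib_left sum_distrib_right mult.assoc
          intro: ideal_prod_memI[where x = "\<lambda>i. - x i" and y = y and n = n]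
          ideal_prod_memI[where x = "\<lambda>i. g * x i" and y = y and n = n]
          ideal_prod_memI[where x = x and y = "\<lambda>i. y i * g" and n = n])
    then show ?thesis by blast
  qed
  have "0 \<in> ideal_prod I J" by (rule ideal_prod_memI[where n = 0]) simp_all
  moreover have "ideal_prod I J \<subseteq> G"
    using ideal_prod_subset_left[OF I] I J by (auto simp: two_sided_ideal_def)
  ultimately show ?thesis
    unfolding two_sided_ideal_def using closed ideal_prod_add by blast
qed

lemma Wset_two_sided_ideal:
  assumes "two_sided_ideal G G" "\<forall>n\<in>B. two_sided_ideal G n" "m \<in> Wset G B"
  shows "two_sided_ideal G m"
  using assms(3) by induction (use assms two_sided_ideal_ideal_prod in auto)

lemma Wset_directed:
  assumes G: "two_sided_ideal G G" and B: "\<forall>n\<in>B. two_sided_ideal G n"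
    and m1: "m1 \<in> Wset G B" and m2: "m2 \<in> Wset G B"
  shows "\<exists>m\<in>Wset G B. m \<subseteq> m1 \<and> m \<subseteq> m2"
  using m2
proof induction
  case W_unit
  then show ?case using m1 Wset_two_sided_ideal[OF G B m1] unfolding two_sided_ideal_def by blast
next
  case (W_mult m n)
  then obtain k where k: "k \<in> Wset G B" "k \<subseteq> m1" "k \<subseteq> m" by blast
  have "ideal_prod k n \<in> Wset G B" using k(1) W_mult(2) by (rule Wset.W_mult)
  moreover have "ideal_prod k n \<subseteq> k"
    using B W_mult(2) by (intro ideal_prod_subset_left[OF Wset_two_sided_ideal[OF G B k(1)]])
      (auto simp: two_sided_ideal_def)
  moreover have "ideal_prod k n \<subseteq> ideal_prod m n" using k(3) by (rule ideal_prod_mono_left)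
  ultimately show ?case using k(2) by blast
qed

lemma subalg_one_mem: "is_kalg_hom sc \<Longrightarrow> subalg sc G \<Longrightarrow> 1 \<in> G"
  unfolding is_kalg_hom_def subalg_def by (metis range_subsetD)

lemma subalg_two_sided_ideal_self:
  assumes "is_kalg_hom sc" "subalg sc G"
  shows "two_sided_ideal G G"
proof -
  have "1 + - 1 \<in> G" using subalg_one_mem[OF assms] assms(2) unfolding subalg_def by blast
  then show ?thesis using assms(2) unfolding two_sided_ideal_def subalg_def by simp
qed

lemma prec_subset_blocks: "prec sc G R \<subseteq> blocks sc G R \<times> blocks sc G R"
proof -
  have "prec_base sc G R \<subseteq> blocks sc G R \<times> blocks sc G R" unfolding prec_base_def by blast
  then show ?thesis unfolding prec_def using trancl_subset_Sigma Id_on_subset_Times by blast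
qed

lemma prec_refl: "B \<in> blocks sc G R \<Longrightarrow> (B, B) \<in> prec sc G R"
  unfolding prec_def by blast

lemma prec_base_subset_prec: "prec_base sc G R \<subseteq> prec sc G R"
  unfolding prec_def by auto

lemma prec_trans: "(B, C) \<in> prec sc G R \<Longrightarrow> (C, D) \<in> prec sc G R \<Longrightarrow> (B, D) \<in> prec sc G R"
  unfolding prec_def by (auto dest: trancl_trans)

lemma prec_subset_Delta: "prec sc G R \<subseteq> Delta sc G R"
  unfolding prec_def Delta_def using trancl_mono by blast

lemma equiv_Delta: "equiv (blocks sc G R) (Delta sc G R)"
proof (rule equivI)
  let ?S = "prec_base sc G R \<union> (prec_base sc G R)\<inverse>"
  have "?S \<subseteq> blocks sc G R \<times> blocks sc G R" unfolding prec_base_def by blast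
  then show "Delta sc G R \<subseteq> blocks sc G R \<times> blocks sc G R"
    unfolding Delta_def using trancl_subset_Sigma by blast
  show "refl_on (blocks sc G R) (Delta sc G R)" unfolding Delta_def refl_on_def by blast
  have "sym (?S\<^sup>+)" by (rule sym_trancl) (auto simp: sym_def)
  then show "sym (Delta sc G R)" unfolding Delta_def sym_def by blast
  show "trans (Delta sc G R)" unfolding Delta_def trans_def by (auto dest: trancl_trans)
qed

lemma prec_Delta_class_iff:
  assumes "D \<in> blocks sc G R // Delta sc G R" "(B, C) \<in> prec sc G R"
  shows "B \<in> D \<longleftrightarrow> C \<in> D"
proof -
  have "(B, C) \<in> Delta sc G R" "(C, B) \<in> Delta sc G R"
    using assms(2) prec_subset_Delta equiv_Delta unfolding equiv_def sym_def by blast+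
  then show ?thesis using in_quotient_imp_closed[OF equiv_Delta assms(1)] by blast
qed

lemma is_block_modE:
  assumes "is_block_mod sc G R act N"
  obtains F f where "finite F" "F \<subseteq> blocks sc G R" "\<forall>B\<in>F. f B \<in> comp act N G B"
    "v - sum f F \<in> N"
  using conjunct1[OF assms[unfolded is_block_mod_def], rule_format, of v]
  by (elim exE conjE) (rule that)

lemma indecomposable_complement_trivial:
  assumes "indecomposable act" "is_submod act S" "is_submod act T" "S \<inter> T = {0}"
    "\<forall>v. \<exists>s\<in>S. \<exists>t\<in>T. v = s + t" "S \<noteq> {0}"
  shows "T = {0}"
  using assms unfolding indecomposable_def by blast

lemma irreducible_submod_UNIV:
  "irreducible_mod act \<Longrightarrow> is_submod act S \<Longrightarrow> S \<noteq> {0} \<Longrightarrow> S = UNIV"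
  unfolding irreducible_mod_def by blast

locale module_action =
  fixes act :: "'a::ring_1 \<Rightarrow> 'v::ab_group_add \<Rightarrow> 'v"
  assumes is_module: "is_module act"
begin

lemma act_add_left: "act (a + b) v = act a v + act b v"
  using is_module unfolding is_module_def by blast

lemma act_add_right: "act a (v + w) = act a v + act a w"
  using is_module unfolding is_module_def by blast

lemma act_mult: "act (a * b) v = act a (act b v)"
  using is_module unfolding is_module_def by blast

lemma act_one: "act 1 v = v"
  using is_module unfolding is_module_def by blast

lemma act_zero_right: "act a 0 = 0"
  using act_add_right[of a 0 0] by simp

lemma act_zero_left: "act 0 v = 0"
  using act_add_left[of 0 0 v] by simp

lemma act_minus_right: "act a (- v) = - act a v"
  using act_add_right[of a v "- v"] by (simp add: act_zero_right minus_unique)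

lemma act_sum_right: "act a (sum f F) = (\<Sum>x\<in>F. act a (f x))"
  by (induction F rule: infinite_finite_induct) (simp_all add: act_zero_right act_add_right)

lemma act_sum_left: "act (sum f F) v = (\<Sum>x\<in>F. act (f x) v)"
  by (induction F rule: infinite_finite_induct) (simp_all add: act_zero_left act_add_left)

end

locale block_module = module_action act
  for act :: "'a::ring_1 \<Rightarrow> 'v::ab_group_add \<Rightarrow> 'v" +
  fixes sc :: "'k::field \<Rightarrow> 'a" and G :: "'a set" and R :: "('a set \<times> 'a set) set"
  assumes one_mem: "1 \<in> G"
    and two_sided_ideal_carrier: "two_sided_ideal G G"
    and equiv_R: "equiv (cfs sc G) R"
    and block_mod: "is_block_mod sc G R act {0}"
begin

abbreviation "blk \<equiv> blocks sc G R"
abbreviation "V_block B \<equiv> comp act {0} G B"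
abbreviation "V_sum D \<equiv> VD act G D"

lemma block_two_sided_ideal: "B \<in> blk \<Longrightarrow> \<forall>n\<in>B. two_sided_ideal G n"
  using in_quotient_imp_subset[OF equiv_R]
  unfolding blocks_def cfs_def maximal_ideal_def by blast

lemma Wset_block_two_sided_ideal: "B \<in> blk \<Longrightarrow> m \<in> Wset G B \<Longrightarrow> two_sided_ideal G m"
  using Wset_two_sided_ideal[OF two_sided_ideal_carrier block_two_sided_ideal] by blast

lemma mem_V_block_iff: "v \<in> V_block B \<longleftrightarrow> (\<exists>m\<in>Wset G B. \<forall>x\<in>m. act x v = 0)"
  unfolding comp_def by simp

lemma V_block_zero: "0 \<in> V_block B"
  unfolding mem_V_block_iff using Wset.W_unit act_zero_right by blast

lemma V_block_add:
  assumes "B \<in> blk" "v \<in> V_block B" "w \<in> V_block B"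
  shows "v + w \<in> V_block B"
proof -
  obtain m1 where m1: "m1 \<in> Wset G B" "\<forall>x\<in>m1. act x v = 0"
    using assms(2) mem_V_block_iff by blast
  obtain m2 where m2: "m2 \<in> Wset G B" "\<forall>x\<in>m2. act x w = 0"
    using assms(3) mem_V_block_iff by blast
  obtain m where "m \<in> Wset G B" "m \<subseteq> m1" "m \<subseteq> m2"
    using Wset_directed[OF two_sided_ideal_carrier block_two_sided_ideal[OF assms(1)] m1(1) m2(1)]
    by blast
  then show ?thesis unfolding mem_V_block_iff using m1 m2 act_add_right by (metis add_0 subsetD)
qed

lemma V_block_minus: "v \<in> V_block B \<Longrightarrow> - v \<in> V_block B"
  unfolding mem_V_block_iff by (simp add: act_minus_right)

lemma V_block_act:
  assumes "B \<in> blk" "g \<in> G" "v \<in> V_block B"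
  shows "act g v \<in> V_block B"
proof -
  obtain m where m: "m \<in> Wset G B" "\<forall>x\<in>m. act x v = 0"
    using assms(3) mem_V_block_iff by blast
  have "\<forall>x\<in>m. x * g \<in> m"
    using Wset_block_two_sided_ideal[OF assms(1) m(1)] assms(2) unfolding two_sided_ideal_def by blast
  then have "\<forall>x\<in>m. act x (act g v) = 0" using m(2) act_mult by metis
  then show ?thesis unfolding mem_V_block_iff using m(1) by blast
qed

lemma suppE:
  assumes "B \<in> supp sc G R act {0}"
  obtains v where "B \<in> blk" "v \<in> V_block B" "v \<noteq> 0"
  using assms unfolding supp_def by blast

lemma V_sum_memI: "finite F \<Longrightarrow> F \<subseteq> D \<Longrightarrow> \<forall>B\<in>F. f B \<in> V_block B \<Longrightarrow> sum f F \<in> V_sum D"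
  unfolding VD_def by blast

lemma V_sum_memE:
  assumes "u \<in> V_sum D"
  obtains F f where "finite F" "F \<subseteq> D" "\<forall>B\<in>F. f B \<in> V_block B" "u = sum f F"
  using assms unfolding VD_def by blast

lemma V_sum_zero: "0 \<in> V_sum D"
  using V_sum_memI[of "{}" D] by simp

lemma V_block_subset_V_sum: "B \<in> D \<Longrightarrow> V_block B \<subseteq> V_sum D"
  using V_sum_memI[of "{B}" D] by auto

lemma V_sum_mono: "D \<subseteq> D' \<Longrightarrow> V_sum D \<subseteq> V_sum D'"
  unfolding VD_def by blast

lemma V_sum_add:
  assumes D: "D \<subseteq> blk" and "u \<in> V_sum D" "w \<in> V_sum D"
  shows "u + w \<in> V_sum D"
proof -
  obtain F f where F: "finite F" "F \<subseteq> D" "\<forall>B\<in>F. f B \<in> V_block B" "u = sum f F"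
    using assms(2) by (rule V_sum_memE)
  obtain F' f' where F': "finite F'" "F' \<subseteq> D" "\<forall>B\<in>F'. f' B \<in> V_block B" "w = sum f' F'"
    using assms(3) by (rule V_sum_memE)
  define h where "h B = (if B \<in> F then f B else 0) + (if B \<in> F' then f' B else 0)" for B
  have fin: "finite (F \<union> F')" using F F' by simp
  have "sum h (F \<union> F') = u + w"
    unfolding h_def sum.distrib sum.inter_restrict[OF fin, symmetric] using F F' by (simp add: Int_absorb1)
  moreover have "\<forall>B\<in>F \<union> F'. h B \<in> V_block B"
    unfolding h_def using F F' D V_block_add V_block_zero by auto
  then have "sum h (F \<union> F') \<in> V_sum D" using fin F(2) F'(2) by (intro V_sum_memI) auto
  ultimately show ?thesis by simp
qed

lemma V_sum_minus:
  assumes "u \<in> V_sum D"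
  shows "- u \<in> V_sum D"
  using assms
proof (rule V_sum_memE)
  fix F f assume F: "finite F" "F \<subseteq> D" "\<forall>B\<in>F. f B \<in> V_block B" "u = sum f F"
  have "\<forall>B\<in>F. - f B \<in> V_block B" using F(3) V_block_minus by blast
  with F(1,2) have "(\<Sum>B\<in>F. - f B) \<in> V_sum D" by (rule V_sum_memI)
  then show "- u \<in> V_sum D" by (simp add: F(4) sum_negf)
qed

lemma V_sum_diff: "D \<subseteq> blk \<Longrightarrow> u \<in> V_sum D \<Longrightarrow> w \<in> V_sum D \<Longrightarrow> u - w \<in> V_sum D"
  using V_sum_add[of D u "- w"] V_sum_minus[of w D] by simp

lemma V_sum_sum: "D \<subseteq> blk \<Longrightarrow> \<forall>i\<in>I. h i \<in> V_sum D \<Longrightarrow> sum h I \<in> V_sum D"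
  by (induction I rule: infinite_finite_induct) (simp_all add: V_sum_zero V_sum_add)

lemma V_sum_act:
  assumes "D \<subseteq> blk" "g \<in> G" "u \<in> V_sum D"
  shows "act g u \<in> V_sum D"
  using assms(3)
proof (rule V_sum_memE)
  fix F f assume F: "finite F" "F \<subseteq> D" "\<forall>B\<in>F. f B \<in> V_block B" "u = sum f F"
  have "\<forall>B\<in>F. act g (f B) \<in> V_block B" using F assms(1,2) V_block_act by blast
  with F(1,2) show "act g u \<in> V_sum D" unfolding F(4) act_sum_right by (rule V_sum_memI)
qed

lemma block_decomposition:
  obtains F f where "finite F" "F \<subseteq> blk" "\<forall>B\<in>F. f B \<in> V_block B" "v = sum f F"
  by (rule is_block_modE[OF block_mod, of v]) (auto intro: that)

lemma block_components_zero:
  assumes "finite F" "F \<subseteq> blk" "\<forall>B\<in>F. f B \<in> V_block B" "sum f F = 0" "B \<in> F"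
  shows "f B = 0"
  using conjunct2[OF block_mod[unfolded is_block_mod_def], rule_format, of F f] assms by simp

lemma V_sum_split:
  assumes "D \<subseteq> blk"
  shows "\<exists>s\<in>V_sum D. \<exists>t\<in>V_sum (blk - D). v = s + t"
proof -
  obtain F f where F: "finite F" "F \<subseteq> blk" "\<forall>B\<in>F. f B \<in> V_block B" "v = sum f F"
    by (rule block_decomposition)
  have "v = sum f (F \<inter> D) + sum f (F - D)" unfolding F(4) by (rule sum.Int_Diff[OF F(1)])
  moreover have "sum f (F \<inter> D) \<in> V_sum D" using F(1,3) by (intro V_sum_memI) auto
  moreover have "sum f (F - D) \<in> V_sum (blk - D)" using F(1-3) by (intro V_sum_memI) auto
  ultimately show ?thesis by blast
qed

lemma V_sum_disjoint:
  assumes DD': "D \<inter> D' = {}" and D: "D \<subseteq> blk" and D': "D' \<subseteq> blk"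
    and "u \<in> V_sum D" "u \<in> V_sum D'"
  shows "u = 0"
proof -
  obtain F f where F: "finite F" "F \<subseteq> D" "\<forall>B\<in>F. f B \<in> V_block B" "u = sum f F"
    using assms(4) by (rule V_sum_memE)
  obtain F' f' where F': "finite F'" "F' \<subseteq> D'" "\<forall>B\<in>F'. f' B \<in> V_block B" "u = sum f' F'"
    using assms(5) by (rule V_sum_memE)
  define h where "h B = (if B \<in> F then f B else - f' B)" for B
  have disj: "F \<inter> F' = {}" using F(2) F'(2) DD' by blast
  have "sum h F = sum f F" by (simp add: h_def)
  moreover have "sum h F' = - sum f' F'"
    unfolding sum_negf[symmetric] using disj by (intro sum.cong) (auto simp: h_def)
  ultimately have "sum h (F \<union> F') = 0"
    unfolding sum.union_disjoint[OF F(1) F'(1) disj] using F(4) F'(4) by simp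
  moreover have "\<forall>B\<in>F \<union> F'. h B \<in> V_block B" unfolding h_def using F(3) F'(3) V_block_minus by auto
  moreover have "finite (F \<union> F')" "F \<union> F' \<subseteq> blk" using F(1,2) F'(1,2) D D' by auto
  ultimately have "h B = 0" if "B \<in> F" for B
    using block_components_zero[of "F \<union> F'" h B] that by simp
  then show ?thesis using F(4) unfolding h_def by simp
qed

lemma V_sum_complement_disjoint:
  "D \<subseteq> blk \<Longrightarrow> u \<in> V_sum D \<Longrightarrow> u \<in> V_sum (blk - D) \<Longrightarrow> u = 0"
  by (rule V_sum_disjoint[of D "blk - D"]) auto

lemma V_sum_absorb:
  assumes D: "D \<subseteq> blk" and C: "C \<in> D" and m: "m \<in> Wset G C"
    and maps: "\<forall>x\<in>m. act x w \<in> V_sum D"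
  shows "w \<in> V_sum D"
proof -
  obtain s t where s: "s \<in> V_sum D" and t: "t \<in> V_sum (blk - D)" and w: "w = s + t"
    using V_sum_split[OF D] by blast
  have "act x t = 0" if x: "x \<in> m" for x
  proof -
    have xG: "x \<in> G" using Wset_block_two_sided_ideal[OF _ m] C D x unfolding two_sided_ideal_def by blast
    have "act x t = act x w - act x s" using w act_add_right by simp
    then have "act x t \<in> V_sum D" using V_sum_diff[OF D] maps x V_sum_act[OF D xG s] by simp
    moreover have "act x t \<in> V_sum (blk - D)" by (rule V_sum_act[OF _ xG t]) blast
    ultimately show ?thesis by (rule V_sum_complement_disjoint[OF D])
  qed
  then have "t \<in> V_block C" unfolding mem_V_block_iff using m by blast
  then have "t \<in> V_sum D" using V_block_subset_V_sum[OF C] by blast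
  then have "t = 0" using V_sum_complement_disjoint[OF D _ t] by blast
  then show ?thesis using w s by simp
qed

lemma act_left_ideal_gen_mem_V_sum:
  assumes "y \<in> left_ideal_gen n" "D \<subseteq> blk" "\<forall>z\<in>n. \<forall>a. act a (act z v) \<in> V_sum D"
  shows "act y v \<in> V_sum D"
proof -
  obtain k a x where y: "y = (\<Sum>i<(k::nat). a i * x i)" "\<forall>i<k. x i \<in> n"
    using assms(1) unfolding left_ideal_gen_def by blast
  have "act y v = (\<Sum>i<k. act (a i) (act (x i) v))" unfolding y by (simp add: act_sum_left act_mult)
  also have "\<dots> \<in> V_sum D" using y assms(2,3) by (intro V_sum_sum) auto
  finally show ?thesis .
qed

lemma act_quotient_component_mem_V_sum:
  assumes D: "D \<subseteq> blk" and C: "C \<in> blk" and y: "y \<in> comp (*) (left_ideal_gen n) G C"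
    and nv: "\<forall>z\<in>n. \<forall>a. act a (act z v) \<in> V_sum D"
    and supp: "C \<in> supp sc G R (*) (left_ideal_gen n) \<Longrightarrow> C \<in> D"
  shows "act y v \<in> V_sum D"
proof (cases "y \<in> left_ideal_gen n")
  case True
  then show ?thesis using act_left_ideal_gen_mem_V_sum D nv by blast
next
  case False
  then have "C \<in> D" using supp C y unfolding supp_def by blast
  moreover obtain m where m: "m \<in> Wset G C" "\<forall>x\<in>m. x * y \<in> left_ideal_gen n"
    using y unfolding comp_def by blast
  moreover have "\<forall>x\<in>m. act x (act y v) \<in> V_sum D"
    using m(2) act_left_ideal_gen_mem_V_sum[OF _ D nv] by (simp add: act_mult[symmetric])
  ultimately show ?thesis using V_sum_absorb[OF D] by blast
qed

lemma V_sum_Delta_classes_span: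
  "\<exists>T h. finite T \<and> T \<subseteq> blk // Delta sc G R \<and> (\<forall>D\<in>T. h D \<in> V_sum D) \<and> v = sum h T"
proof -
  obtain F f where F: "finite F" "F \<subseteq> blk" "\<forall>B\<in>F. f B \<in> V_block B" "v = sum f F"
    by (rule block_decomposition)
  define cl where "cl B = Delta sc G R `` {B}" for B
  define h where "h D = sum f {B \<in> F. cl B = D}" for D
  have "cl ` F \<subseteq> blk // Delta sc G R" using F(2) unfolding cl_def by (auto intro: quotientI)
  moreover have "v = sum h (cl ` F)"
    unfolding h_def F(4) by (rule sum.group[OF F(1) finite_imageI[OF F(1)] order_refl, symmetric])
  moreover have "h D \<in> V_sum D" for D
  proof -
    have "{B \<in> F. cl B = D} \<subseteq> D"
      using F(2) equiv_class_self[OF equiv_Delta] unfolding cl_def by blast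
    then show ?thesis unfolding h_def using F by (intro V_sum_memI) auto
  qed
  ultimately show ?thesis using F(1) by (intro exI[of _ "cl ` F"] exI[of _ h]) simp
qed

lemma V_sum_Delta_classes_independent:
  assumes T: "finite T" "T \<subseteq> blk // Delta sc G R" "\<forall>D\<in>T. h D \<in> V_sum D" "sum h T = 0"
    and D: "D \<in> T"
  shows "h D = 0"
proof -
  have Dq: "D \<in> blk // Delta sc G R" using T(2) D by blast
  have "h D' \<in> V_sum (blk - D)" if D': "D' \<in> T - {D}" for D'
  proof -
    have D'q: "D' \<in> blk // Delta sc G R" using D' T(2) by blast
    then have "D' \<inter> D = {}" using quotient_disj[OF equiv_Delta D'q Dq] D' by blast
    then have "D' \<subseteq> blk - D" using in_quotient_imp_subset[OF equiv_Delta D'q] by blast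
    moreover have "h D' \<in> V_sum D'" using T(3) D' by blast
    ultimately show ?thesis using V_sum_mono by blast
  qed
  then have "sum h (T - {D}) \<in> V_sum (blk - D)" by (intro V_sum_sum) auto
  moreover have "h D = - sum h (T - {D})"
    using T(1,4) D sum.remove[of T D h] by (simp add: eq_neg_iff_add_eq_0)
  ultimately have "h D \<in> V_sum (blk - D)" using V_sum_minus by metis
  moreover have "h D \<in> V_sum D" using T(3) D by blast
  ultimately show "h D = 0"
    using V_sum_complement_disjoint[OF in_quotient_imp_subset[OF equiv_Delta Dq]] by blast
qed

lemma dsum_V_sum_Delta_classes: "is_dsum (blk // Delta sc G R) V_sum"
  unfolding is_dsum_def using V_sum_Delta_classes_span V_sum_Delta_classes_independent by blast

end

locale HC_setting = block_module act sc G R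
  for act :: "'a::ring_1 \<Rightarrow> 'v::ab_group_add \<Rightarrow> 'v"
    and sc :: "'k::field \<Rightarrow> 'a" and G :: "'a set" and R :: "('a set \<times> 'a set) set" +
  assumes HC_block_subalg: "HC_block_subalg sc G R"
begin

lemma act_annihilated_mem_V_sum_prec_upset:
  assumes B: "B \<in> blk"
  shows "m \<in> Wset G B \<Longrightarrow> \<forall>x\<in>m. act x v = 0 \<Longrightarrow> act a v \<in> V_sum (prec sc G R `` {B})"
proof (induction m arbitrary: v a rule: Wset.induct)
  case W_unit
  then have "v = 0" using one_mem act_one by metis
  then show ?case using act_zero_right V_sum_zero by simp
next
  case (W_mult m n)
  let ?U = "prec sc G R `` {B}"
  have U: "?U \<subseteq> blk" using prec_subset_blocks by blast
  have nv: "\<forall>z\<in>n. \<forall>a. act a (act z v) \<in> V_sum ?U"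
    using W_mult.IH W_mult.prems mult_mem_ideal_prod by (metis act_mult)
  have "ideal_prod G n = n"
    using ideal_prod_carrier_left one_mem block_two_sided_ideal[OF B] W_mult.hyps(2) by blast
  moreover have "ideal_prod G n \<in> Wset G B" using W_mult.hyps(2) by (blast intro: Wset.intros)
  ultimately have "is_block_mod sc G R (*) (left_ideal_gen n)"
    using HC_block_subalg B unfolding HC_block_subalg_def by metis
  then obtain F f where F: "finite F" "F \<subseteq> blk" "\<forall>C\<in>F. f C \<in> comp (*) (left_ideal_gen n) G C"
      "a - sum f F \<in> left_ideal_gen n"
    by (rule is_block_modE)
  have supp_U: "C \<in> ?U" if C: "C \<in> supp sc G R (*) (left_ideal_gen n)" for C
  proof -
    have "C \<in> blk" using C unfolding supp_def by blast
    then have "(B, C) \<in> prec_base sc G R" unfolding prec_base_def using B W_mult.hyps(2) C by blast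
    then show ?thesis using prec_base_subset_prec by blast
  qed
  have "act (f C) v \<in> V_sum ?U" if C: "C \<in> F" for C
    using F(2,3) C nv supp_U by (intro act_quotient_component_mem_V_sum[OF U]) auto
  then have "(\<Sum>C\<in>F. act (f C) v) \<in> V_sum ?U" by (intro V_sum_sum[OF U]) blast
  then have "(\<Sum>C\<in>F. act (f C) v) + act (a - sum f F) v \<in> V_sum ?U"
    using act_left_ideal_gen_mem_V_sum[OF F(4) U nv] by (rule V_sum_add[OF U])
  then show ?case using act_add_left[of "sum f F" "a - sum f F" v] by (simp add: act_sum_left)
qed

lemma is_submod_V_sum_if_prec_closed:
  assumes D: "D \<subseteq> blk" and closed: "\<forall>B C. B \<in> D \<and> (B, C) \<in> prec sc G R \<longrightarrow> C \<in> D"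
  shows "is_submod act (V_sum D)"
  unfolding is_submod_def
proof (intro conjI ballI allI)
  show "0 \<in> V_sum D" by (rule V_sum_zero)
  show "x + y \<in> V_sum D" if "x \<in> V_sum D" "y \<in> V_sum D" for x y
    using V_sum_add[OF D] that .
  show "act a x \<in> V_sum D" if "x \<in> V_sum D" for a x
    using that
  proof (rule V_sum_memE)
    fix F f assume F: "finite F" "F \<subseteq> D" "\<forall>B\<in>F. f B \<in> V_block B" "x = sum f F"
    have "act a (f B) \<in> V_sum D" if B: "B \<in> F" for B
    proof -
      obtain m where "m \<in> Wset G B" "\<forall>x\<in>m. act x (f B) = 0"
        using F(3) B mem_V_block_iff by blast
      then have "act a (f B) \<in> V_sum (prec sc G R `` {B})"
        using act_annihilated_mem_V_sum_prec_upset B F(2) D by blast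
      moreover have "prec sc G R `` {B} \<subseteq> D" using closed B F(2) by blast
      ultimately show ?thesis using V_sum_mono by blast
    qed
    then show "act a x \<in> V_sum D" unfolding F(4) act_sum_right by (intro V_sum_sum[OF D]) auto
  qed
qed

lemma is_submod_V_sum_Delta_class:
  assumes "D \<in> blk // Delta sc G R"
  shows "is_submod act (V_sum D)"
  using assms in_quotient_imp_subset[OF equiv_Delta assms] prec_Delta_class_iff
  by (intro is_submod_V_sum_if_prec_closed) blast+

lemma supp_subset_Delta_class_if_indecomposable:
  assumes ind: "indecomposable act" and B: "B \<in> supp sc G R act {0}"
  shows "supp sc G R act {0} \<subseteq> Delta sc G R `` {B}"
proof
  fix C assume C: "C \<in> supp sc G R act {0}"
  obtain v where Bb: "B \<in> blk" and v: "v \<in> V_block B" "v \<noteq> 0" using B by (rule suppE)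
  obtain w where Cb: "C \<in> blk" and w: "w \<in> V_block C" "w \<noteq> 0" using C by (rule suppE)
  define D where "D = Delta sc G R `` {B}"
  have Dq: "D \<in> blk // Delta sc G R" unfolding D_def by (rule quotientI[OF Bb])
  have D: "D \<subseteq> blk" using in_quotient_imp_subset[OF equiv_Delta Dq] .
  have "B \<in> D" unfolding D_def by (rule equiv_class_self[OF equiv_Delta Bb])
  then have "v \<in> V_sum D" using V_block_subset_V_sum v(1) by blast
  then have "V_sum D \<noteq> {0}" using v(2) by blast
  moreover have "is_submod act (V_sum D)" using is_submod_V_sum_Delta_class[OF Dq] .
  moreover have "is_submod act (V_sum (blk - D))"
    using prec_Delta_class_iff[OF Dq] prec_subset_blocks
    by (intro is_submod_V_sum_if_prec_closed) blast+
  moreover have "V_sum D \<inter> V_sum (blk - D) = {0}"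
    using V_sum_complement_disjoint[OF D] V_sum_zero by blast
  ultimately have "V_sum (blk - D) = {0}"
    using indecomposable_complement_trivial[OF ind] V_sum_split[OF D] by blast
  then have "C \<notin> blk - D" using V_block_subset_V_sum w by blast
  then show "C \<in> Delta sc G R `` {B}" using Cb unfolding D_def by blast
qed

lemma prec_if_irreducible:
  assumes irr: "irreducible_mod act"
    and B: "B \<in> supp sc G R act {0}" and C: "C \<in> supp sc G R act {0}"
  shows "(B, C) \<in> prec sc G R"
proof (rule ccontr)
  assume notBC: "(B, C) \<notin> prec sc G R"
  obtain v where Bb: "B \<in> blk" and v: "v \<in> V_block B" "v \<noteq> 0" using B by (rule suppE)
  obtain w where Cb: "C \<in> blk" and w: "w \<in> V_block C" "w \<noteq> 0" using C by (rule suppE)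
  define U where "U = prec sc G R `` {B}"
  have U: "U \<subseteq> blk" unfolding U_def using prec_subset_blocks by blast
  have "B \<in> U" unfolding U_def using prec_refl[OF Bb] by blast
  then have "v \<in> V_sum U" using V_block_subset_V_sum v(1) by blast
  then have "V_sum U \<noteq> {0}" using v(2) by blast
  moreover have "is_submod act (V_sum U)"
    using U prec_trans unfolding U_def by (intro is_submod_V_sum_if_prec_closed) blast+
  ultimately have "w \<in> V_sum U" using irreducible_submod_UNIV[OF irr] by blast
  moreover have "w \<in> V_sum {C}" using V_block_subset_V_sum w(1) by blast
  moreover have "U \<inter> {C} = {}" using notBC unfolding U_def by blast
  ultimately show False using V_sum_disjoint[OF _ U] Cb w(2) by blast
qed

lemma supp_subset_Nabla_class_if_irreducible:
  assumes "irreducible_mod act" "B \<in> supp sc G R act {0}"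
  shows "supp sc G R act {0} \<subseteq> Nabla sc G R `` {B}"
  using prec_if_irreducible[OF assms(1)] assms(2) unfolding Nabla_def by blast

end

theorem mainTheorem19:
  fixes sc :: "'k::field \<Rightarrow> 'a::ring_1" and G :: "'a set" and R :: "('a set \<times> 'a set) set"
    and act :: "'a \<Rightarrow> 'v::ab_group_add \<Rightarrow> 'v"
  assumes alg: "is_kalg_hom sc"
    and sub: "subalg sc G"
    and eqv: "equiv (cfs sc G) R"
    and hc: "HC_block_subalg sc G R"
    and V: "HC_block_module sc G R act"
  shows "(\<forall>D. D \<subseteq> blocks sc G R \<and> (\<forall>B C. B \<in> D \<and> (B, C) \<in> prec sc G R \<longrightarrow> C \<in> D)
            \<longrightarrow> is_submod act (VD act G D))
       \<and> ((\<forall>D \<in> blocks sc G R // Delta sc G R. is_submod act (VD act G D))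
            \<and> is_dsum (blocks sc G R // Delta sc G R) (VD act G))
       \<and> (indecomposable act \<longrightarrow> (\<forall>B \<in> supp sc G R act {0}.
            supp sc G R act {0} \<subseteq> Delta sc G R `` {B}))
       \<and> (irreducible_mod act \<longrightarrow> (\<forall>B \<in> supp sc G R act {0}.
            supp sc G R act {0} \<subseteq> Nabla sc G R `` {B}))"
proof -
  interpret HC_setting act sc G R
    using V hc eqv subalg_one_mem[OF alg sub] subalg_two_sided_ideal_self[OF alg sub]
    by unfold_locales (simp_all add: HC_block_module_def)
  show ?thesis
  proof (intro conjI allI impI ballI)
    show "is_submod act (VD act G D)"
      if "D \<subseteq> blocks sc G R \<and> (\<forall>B C. B \<in> D \<and> (B, C) \<in> prec sc G R \<longrightarrow> C \<in> D)" for D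
      using that is_submod_V_sum_if_prec_closed by blast
  qed (simp_all add: is_submod_V_sum_Delta_class dsum_V_sum_Delta_classes
      supp_subset_Delta_class_if_indecomposable supp_subset_Nabla_class_if_irreducible)
qed

end
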